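(* Let $\Delta$ and $\Delta'$ be fat triangles, and let $S(\Delta)$, $S(\Delta')$ be sets of canonical chords (one per vertex) of $\Delta$ and $\Delta'$ respectively, with $P(\Delta)$ the set of endpoints of the chords in $S(\Delta)$. If $\Delta$ intersects $\Delta'$, then at least one of the following holds: (i) $\Delta$ contains a vertex of $\Delta'$; (ii) a point from $P(\Delta)$ lies inside $\Delta'$; (iii) a canonical chord from $S(\Delta)$ intersects a canonical chord from $S(\Delta')$.
   Context: Fix an absolute constant $\alpha>0$; a triangle is fat if its minimum angle is at least $\alpha$. Let $A:=\{i\cdot(\alpha/2): 0\le i\le\lfloor 4\pi/\alpha\rfloor\}$ be the set of canonical directions (angles). A canonical segment is a segment whose direction is in $A$. A canonical chord of a fat triangle $\Delta$ is a canonical segment connecting a vertex of $\Delta$ to the opposite side of $\Delta$ (each vertex of a fat triangle admits one). $S(\Delta)$ is a set of three canonical chords of $\Delta$, one per vertex, and $P(\Delta)$ is the set of endpoints of these chords (which includes the vertices of $\Delta$). *)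

theory Defs
  imports "HOL-Analysis.Analysis"
begin

definition triangle :: "complex \<Rightarrow> complex \<Rightarrow> complex \<Rightarrow> complex set" where
  "triangle a b c = convex hull {a, b, c}"

definition vertex_angle :: "complex \<Rightarrow> complex \<Rightarrow> complex \<Rightarrow> real" where
  "vertex_angle a b c = arccos (((b - a) \<bullet> (c - a)) / (norm (b - a) * norm (c - a)))"

definition fat :: "real \<Rightarrow> complex \<Rightarrow> complex \<Rightarrow> complex \<Rightarrow> bool" where
  "fat \<alpha> a b c \<longleftrightarrow> \<not> collinear {a, b, c} \<and>
     vertex_angle a b c \<ge> \<alpha> \<and> vertex_angle b c a \<ge> \<alpha> \<and> vertex_angle c a b \<ge> \<alpha>"

definition canonical_dirs :: "real \<Rightarrow> real set" where
  "canonical_dirs \<alpha> = {real i * (\<alpha> / 2) | i. i \<le> nat \<lfloor>4 * pi / \<alpha>\<rfloor>}"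

definition canonical_segment :: "real \<Rightarrow> complex \<Rightarrow> complex \<Rightarrow> bool" where
  "canonical_segment \<alpha> p q \<longleftrightarrow>
     (\<exists>\<theta>\<in>canonical_dirs \<alpha>. \<exists>r::real. r \<noteq> 0 \<and> q - p = complex_of_real r * cis \<theta>)"

definition canonical_chord :: "real \<Rightarrow> complex \<Rightarrow> complex \<Rightarrow> complex \<Rightarrow> complex \<Rightarrow> bool" where
  "canonical_chord \<alpha> a b c p \<longleftrightarrow> p \<in> closed_segment b c \<and> canonical_segment \<alpha> a p"

end

theory Submission
  imports Defs
begin

text \<open>A line meeting a triangle meets one of its cevians: some vertex lies weakly on one side
  of the line and the other two weakly on the other side, hence so does the foot of the cevian
  from that vertex. A segment whose endpoints lie outside a convex set contains every point of
  its line inside that set; so a segment with endpoints outside a triangle that meets the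
  triangle meets one of its cevians.

  If (i) and (ii) fail, then \<Delta>, being connected, meeting \<Delta>' and not contained in it,
  meets an edge of \<Delta>'. That edge has its endpoints outside \<Delta>, so it meets a cevian of
  \<Delta> at a point of \<Delta>'; this cevian has its endpoints outside \<Delta>', so it meets a
  cevian of \<Delta>', which is (iii).\<close>

lemma base_in_closed_segment_of_opposite_offsets:
  fixes p d :: "'a::real_vector"
  assumes "t \<le> 0" "0 \<le> s"
  shows "p \<in> closed_segment (p + t *\<^sub>R d) (p + s *\<^sub>R d)"
proof -
  have "linear (\<lambda>u::real. u *\<^sub>R d)"
    by (simp add: linear_scaleR_left)
  then have "closed_segment (t *\<^sub>R d) (s *\<^sub>R d) = (\<lambda>u. u *\<^sub>R d) ` closed_segment t s"
    by (rule closed_segment_linear_image)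
  moreover have "(0::real) \<in> closed_segment t s"
    using assms by (simp add: closed_segment_eq_real_ivl)
  ultimately have "0 \<in> closed_segment (t *\<^sub>R d) (s *\<^sub>R d)"
    by force
  then show ?thesis
    by (simp add: closed_segment_translation)
qed

lemma convex_Int_affine_hull_2_subset_closed_segment:
  fixes p q :: "'a::real_vector"
  assumes "convex T" "p \<notin> T" "q \<notin> T" "closed_segment p q \<inter> T \<noteq> {}"
  shows "affine hull {p, q} \<inter> T \<subseteq> closed_segment p q"
proof
  fix y
  assume "y \<in> affine hull {p, q} \<inter> T"
  then obtain t where y: "y = p + t *\<^sub>R (q - p)" and "y \<in> T"
    by (auto simp: affine_hull_2_alt)
  obtain s x where s: "0 \<le> s" "s \<le> 1" and x: "x = p + s *\<^sub>R (q - p)" and "x \<in> T"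
    using assms(4) by (auto simp: in_segment algebra_simps)
  have "closed_segment y x \<subseteq> T"
    using \<open>x \<in> T\<close> \<open>y \<in> T\<close> \<open>convex T\<close> by (simp add: closed_segment_subset)
  moreover have "p \<in> closed_segment y x" if "t < 0"
    using base_in_closed_segment_of_opposite_offsets[of t s p "q - p"] that s by (simp add: x y)
  moreover have "q \<in> closed_segment y x" if "t > 1"
    using base_in_closed_segment_of_opposite_offsets[of "s - 1" "t - 1" q "q - p"] that s
    by (simp add: x y closed_segment_commute algebra_simps)
  ultimately have "0 \<le> t" "t \<le> 1"
    using assms(2,3) by (meson not_le subsetD)+
  then show "y \<in> closed_segment p q"
    by (auto simp: y in_segment algebra_simps intro!: exI[of _ t])
qed

lemma complex_affine_hull_2_eq_hyperplane:
  fixes p q :: complex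
  assumes "p \<noteq> q"
  shows "affine hull {p, q} = {y. (\<i> * (q - p)) \<bullet> y = (\<i> * (q - p)) \<bullet> p}"
proof
  show "affine hull {p, q} \<subseteq> {y. (\<i> * (q - p)) \<bullet> y = (\<i> * (q - p)) \<bullet> p}"
  proof (rule hull_minimal)
    show "{p, q} \<subseteq> {y. (\<i> * (q - p)) \<bullet> y = (\<i> * (q - p)) \<bullet> p}"
      by (simp add: inner_complex_def algebra_simps)
  qed (rule affine_hyperplane)
next
  show "{y. (\<i> * (q - p)) \<bullet> y = (\<i> * (q - p)) \<bullet> p} \<subseteq> affine hull {p, q}"
  proof
    fix y
    assume y: "y \<in> {y. (\<i> * (q - p)) \<bullet> y = (\<i> * (q - p)) \<bullet> p}"
    define d e where "d = q - p" and "e = y - p"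
    have "Re d * Im e = Im d * Re e"
      using y by (simp add: d_def e_def inner_complex_def algebra_simps)
    then have "(d \<bullet> d) *\<^sub>R e = (d \<bullet> e) *\<^sub>R d"
      by (simp add: complex_eq_iff inner_complex_def) algebra
    moreover have "d \<bullet> d \<noteq> 0"
      using assms by (simp add: d_def)
    ultimately have "e = (d \<bullet> e / (d \<bullet> d)) *\<^sub>R d"
      by (metis divide_inverse_commute scaleR_scaleR inverse_eq_divide scaleR_one
          left_inverse)
    then have "y = p + (d \<bullet> e / (d \<bullet> d)) *\<^sub>R (q - p)"
      by (simp add: d_def e_def algebra_simps)
    then show "y \<in> affine hull {p, q}"
      by (auto simp: affine_hull_2_alt)
  qed
qed

lemma cevian_meets_hyperplane:
  fixes a b c pa n :: "'a::real_inner"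
  assumes "pa \<in> closed_segment b c" "n \<bullet> a \<le> k" "k \<le> n \<bullet> b" "k \<le> n \<bullet> c"
  shows "\<exists>y\<in>closed_segment a pa. n \<bullet> y = k"
proof -
  have "closed_segment b c \<subseteq> {y. n \<bullet> y \<ge> k}"
    using assms(3,4) by (intro closed_segment_subset) (auto intro: convex_halfspace_ge)
  then have "k \<le> n \<bullet> pa"
    using assms(1) by blast
  then show ?thesis
    using connected_ivt_hyperplane[OF connected_segment _ _ assms(2)] by blast
qed

lemma hyperplane_meets_cevian:
  fixes a b c pa pb pc x n :: "'a::real_inner"
  assumes "pa \<in> closed_segment b c" "pb \<in> closed_segment c a" "pc \<in> closed_segment a b"
    and "x \<in> convex hull {a, b, c}" "n \<bullet> x = k"
  shows "\<exists>s\<in>{closed_segment a pa, closed_segment b pb, closed_segment c pc}. \<exists>y\<in>s. n \<bullet> y = k"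
proof -
  have separated: "\<exists>y\<in>closed_segment v pv. n \<bullet> y = k"
    if "pv \<in> closed_segment w w'"
      "n \<bullet> v \<le> k \<and> k \<le> n \<bullet> w \<and> k \<le> n \<bullet> w' \<or> n \<bullet> v \<ge> k \<and> k \<ge> n \<bullet> w \<and> k \<ge> n \<bullet> w'"
    for v w w' pv
    using that cevian_meets_hyperplane[where n = n] cevian_meets_hyperplane[where n = "-n" and k = "-k"]
    by auto
  have not_above: "\<not> (k < n \<bullet> a \<and> k < n \<bullet> b \<and> k < n \<bullet> c)"
  proof
    assume "k < n \<bullet> a \<and> k < n \<bullet> b \<and> k < n \<bullet> c"
    then have "convex hull {a, b, c} \<subseteq> {y. k < n \<bullet> y}"
      by (intro hull_minimal) (auto intro: convex_halfspace_gt)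
    then show False
      using assms(4,5) by blast
  qed
  have not_below: "\<not> (n \<bullet> a < k \<and> n \<bullet> b < k \<and> n \<bullet> c < k)"
  proof
    assume "n \<bullet> a < k \<and> n \<bullet> b < k \<and> n \<bullet> c < k"
    then have "convex hull {a, b, c} \<subseteq> {y. n \<bullet> y < k}"
      by (intro hull_minimal) (auto intro: convex_halfspace_lt)
    then show False
      using assms(4,5) by blast
  qed
  have "(n \<bullet> a \<le> k \<and> k \<le> n \<bullet> b \<and> k \<le> n \<bullet> c \<or> n \<bullet> a \<ge> k \<and> k \<ge> n \<bullet> b \<and> k \<ge> n \<bullet> c) \<or>
        (n \<bullet> b \<le> k \<and> k \<le> n \<bullet> c \<and> k \<le> n \<bullet> a \<or> n \<bullet> b \<ge> k \<and> k \<ge> n \<bullet> c \<and> k \<ge> n \<bullet> a) \<or>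
        (n \<bullet> c \<le> k \<and> k \<le> n \<bullet> a \<and> k \<le> n \<bullet> b \<or> n \<bullet> c \<ge> k \<and> k \<ge> n \<bullet> a \<and> k \<ge> n \<bullet> b)"
    using not_above not_below by argo
  then show ?thesis
    using separated[OF assms(1)] separated[OF assms(2)] separated[OF assms(3)] by blast
qed

lemma cevian_subset_convex_hull:
  assumes "pa \<in> closed_segment b c"
  shows "closed_segment a pa \<subseteq> convex hull {a, b, c}"
proof (rule closed_segment_subset_convex_hull)
  have "closed_segment b c \<subseteq> convex hull {a, b, c}"
    by (intro closed_segment_subset_convex_hull) (simp_all add: hull_inc)
  then show "pa \<in> convex hull {a, b, c}"
    using assms by blast
qed (simp add: hull_inc)

lemma segment_meets_cevian:
  fixes a b c pa pb pc p q :: complex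
  assumes "pa \<in> closed_segment b c" "pb \<in> closed_segment c a" "pc \<in> closed_segment a b"
    and "p \<notin> convex hull {a, b, c}" "q \<notin> convex hull {a, b, c}"
    and "closed_segment p q \<inter> convex hull {a, b, c} \<noteq> {}"
  shows "\<exists>s\<in>{closed_segment a pa, closed_segment b pb, closed_segment c pc}.
           s \<inter> closed_segment p q \<noteq> {}"
proof -
  let ?T = "convex hull {a, b, c}" and ?n = "\<i> * (q - p)"
  obtain x where x: "x \<in> closed_segment p q" "x \<in> ?T"
    using assms(6) by blast
  have "p \<noteq> q"
    using x assms(4) by auto
  have "closed_segment p q \<subseteq> affine hull {p, q}"
    by (simp add: segment_convex_hull convex_hull_subset_affine_hull)
  then have "?n \<bullet> x = ?n \<bullet> p"
    using x(1) complex_affine_hull_2_eq_hyperplane[OF \<open>p \<noteq> q\<close>] by blast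
  then obtain s y where s: "s \<in> {closed_segment a pa, closed_segment b pb, closed_segment c pc}"
    and "y \<in> s" "?n \<bullet> y = ?n \<bullet> p"
    using hyperplane_meets_cevian[OF assms(1-3) x(2) \<open>?n \<bullet> x = ?n \<bullet> p\<close>] by blast
  have "{b, c, a} = {a, b, c}" "{c, a, b} = {a, b, c}"
    by auto
  then have "s \<subseteq> ?T"
    using s cevian_subset_convex_hull[OF assms(1), of a] cevian_subset_convex_hull[OF assms(2), of b]
      cevian_subset_convex_hull[OF assms(3), of c]
    by auto
  then have "y \<in> affine hull {p, q} \<inter> ?T"
    using \<open>y \<in> s\<close> \<open>?n \<bullet> y = ?n \<bullet> p\<close> complex_affine_hull_2_eq_hyperplane[OF \<open>p \<noteq> q\<close>] by blast
  then have "y \<in> closed_segment p q"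
    using convex_Int_affine_hull_2_subset_closed_segment[OF _ assms(4-6)] by blast
  then show ?thesis
    using s \<open>y \<in> s\<close> by blast
qed

lemma connected_meets_triangle_edge:
  fixes S :: "complex set"
  assumes "connected S" "S \<inter> convex hull {a, b, c} \<noteq> {}" "\<not> S \<subseteq> convex hull {a, b, c}"
  shows "\<exists>u\<in>{a, b, c}. \<exists>v\<in>{a, b, c}. S \<inter> closed_segment u v \<noteq> {}"
proof -
  have "S \<inter> frontier (convex hull {a, b, c}) \<noteq> {}"
    using assms by (intro connected_Int_frontier) auto
  then show ?thesis
    using frontier_of_triangle[of a b c] by auto
qed

theorem mainTheorem10:
  fixes \<alpha> :: real and a b c pa pb pc a' b' c' pa' pb' pc' :: complex
  assumes "\<alpha> > 0"
    and "fat \<alpha> a b c" and "fat \<alpha> a' b' c'"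
    and "canonical_chord \<alpha> a b c pa" and "canonical_chord \<alpha> b c a pb"
    and "canonical_chord \<alpha> c a b pc"
    and "canonical_chord \<alpha> a' b' c' pa'" and "canonical_chord \<alpha> b' c' a' pb'"
    and "canonical_chord \<alpha> c' a' b' pc'"
    and "triangle a b c \<inter> triangle a' b' c' \<noteq> {}"
  shows "(\<exists>v\<in>{a', b', c'}. v \<in> triangle a b c)
       \<or> (\<exists>p\<in>{a, b, c, pa, pb, pc}. p \<in> triangle a' b' c')
       \<or> (\<exists>s\<in>{closed_segment a pa, closed_segment b pb, closed_segment c pc}.
            \<exists>s'\<in>{closed_segment a' pa', closed_segment b' pb', closed_segment c' pc'}.
              s \<inter> s' \<noteq> {})"
proof (rule ccontr)
  let ?T = "convex hull {a, b, c}" and ?T' = "convex hull {a', b', c'}"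
  let ?S = "{closed_segment a pa, closed_segment b pb, closed_segment c pc}"
  let ?S' = "{closed_segment a' pa', closed_segment b' pb', closed_segment c' pc'}"
  assume contra: "\<not> ?thesis"
  then have outside: "\<forall>v\<in>{a', b', c'}. v \<notin> ?T" "\<forall>p\<in>{a, b, c, pa, pb, pc}. p \<notin> ?T'"
    unfolding triangle_def by blast+
  have feet: "pa \<in> closed_segment b c" "pb \<in> closed_segment c a" "pc \<in> closed_segment a b"
    and feet': "pa' \<in> closed_segment b' c'" "pb' \<in> closed_segment c' a'" "pc' \<in> closed_segment a' b'"
    using assms(4-9) by (simp_all add: canonical_chord_def)
  have "\<exists>u\<in>{a', b', c'}. \<exists>v\<in>{a', b', c'}. ?T \<inter> closed_segment u v \<noteq> {}"
  proof (rule connected_meets_triangle_edge)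
    show "connected ?T"
      by (simp add: convex_connected)
    show "?T \<inter> ?T' \<noteq> {}"
      using assms(10) by (simp add: triangle_def)
    show "\<not> ?T \<subseteq> ?T'"
      using outside(2) hull_inc[of a "{a, b, c}"] by blast
  qed
  then obtain u v where uv: "u \<in> {a', b', c'}" "v \<in> {a', b', c'}"
    and "closed_segment u v \<inter> ?T \<noteq> {}"
    by blast
  then obtain s where s: "s \<in> ?S" "s \<inter> closed_segment u v \<noteq> {}"
    using segment_meets_cevian[OF feet, of u v] outside(1) by blast
  have "closed_segment u v \<subseteq> ?T'"
    using uv by (intro closed_segment_subset_convex_hull) (simp_all add: hull_inc)
  then have "s \<inter> ?T' \<noteq> {}"
    using s(2) by blast
  moreover obtain w pw where "s = closed_segment w pw" "w \<notin> ?T'" "pw \<notin> ?T'"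
    using s(1) outside(2) by blast
  ultimately obtain s' where "s' \<in> ?S'" "s' \<inter> s \<noteq> {}"
    using segment_meets_cevian[OF feet'] by (metis Int_commute)
  then show False
    using contra s(1) by blast
qed

end
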